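(* Let $\mathcal E=\widetilde{\Omega^1_D}(\mathcal A)$ be the bimodule of one-forms of a spectral triple $(\mathcal A,\mathcal H,D)$. Suppose $\mathcal E$ is free of finite rank as a right $\mathcal A$-module, $\mathcal E=\mathbb C^n\otimes_{\mathbb C}\mathcal A$, with left module structure $a(e_i\otimes b)=e_i\otimes ab$ for a basis $e_1,\dots,e_n$ of $\mathbb C^n$ and $a,b\in\mathcal A$. Then $\mathcal E$ satisfies Assumption III.
   Context: $\mathcal E$ is the span in $B(\mathcal H)$ of $a[D,b]$; $\mathcal Z(\mathcal E)=\{e:ea=ae\ \forall a\in\mathcal A\}$, $\mathcal Z(\mathcal A)$ the center of $\mathcal A$. Assumption III: $\mathcal Z(\mathcal E)$ is finitely generated projective over $\mathcal Z(\mathcal A)$ and the map $\mathcal Z(\mathcal E)\otimes_{\mathcal Z(\mathcal A)}\mathcal A\to\mathcal E$, $e\otimes a\mapsto ea$, is an isomorphism of vector spaces. *)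

theory Defs
  imports Complex_Main
begin

text \<open>A unital complex algebra is modelled as a ring 'b (playing the role of B(H))
 together with a central unital ring homomorphism sc from the complex numbers;
 complex scalar multiplication is c . x = sc c * x.\<close>
definition cplx_algebra :: "(complex \<Rightarrow> 'b::ring_1) \<Rightarrow> bool" where
  "cplx_algebra sc \<longleftrightarrow>
     (\<forall>c d. sc (c + d) = sc c + sc d) \<and> (\<forall>c d. sc (c * d) = sc c * sc d) \<and>
     sc 1 = 1 \<and> (\<forall>c x. sc c * x = x * sc c)"

definition cplx_subalgebra :: "(complex \<Rightarrow> 'b::ring_1) \<Rightarrow> 'b set \<Rightarrow> bool" where
  "cplx_subalgebra sc A \<longleftrightarrow> 1 \<in> A \<and>
     (\<forall>a\<in>A. \<forall>b\<in>A. a + b \<in> A \<and> a * b \<in> A) \<and> (\<forall>c. \<forall>a\<in>A. sc c * a \<in> A)"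

text \<open>Abstraction of b \<mapsto> [D,b]: a complex-linear derivation from A into the ambient algebra.\<close>
definition cderivation :: "(complex \<Rightarrow> 'b::ring_1) \<Rightarrow> 'b set \<Rightarrow> ('b \<Rightarrow> 'b) \<Rightarrow> bool" where
  "cderivation sc A \<delta> \<longleftrightarrow>
     (\<forall>a\<in>A. \<forall>b\<in>A. \<delta> (a + b) = \<delta> a + \<delta> b \<and> \<delta> (a * b) = \<delta> a * b + a * \<delta> b) \<and>
     (\<forall>c. \<forall>a\<in>A. \<delta> (sc c * a) = sc c * \<delta> a)"

definition one_forms :: "(complex \<Rightarrow> 'b::ring_1) \<Rightarrow> 'b set \<Rightarrow> ('b \<Rightarrow> 'b) \<Rightarrow> 'b set" where
  "one_forms sc A \<delta> = {x. \<exists>(m::nat) c a b. (\<forall>k<m. a k \<in> A \<and> b k \<in> A) \<and>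
                          x = (\<Sum>k<m. sc (c k) * (a k * \<delta> (b k)))}"

text \<open>n-tuples with entries in S (indices 0..n-1, zero elsewhere).\<close>
definition tuples :: "'b::zero set \<Rightarrow> nat \<Rightarrow> (nat \<Rightarrow> 'b) set" where
  "tuples S n = {f. (\<forall>i<n. f i \<in> S) \<and> (\<forall>i\<ge>n. f i = 0)}"

text \<open>E is isomorphic, as an A-bimodule (and complex vector space), to C^n \<otimes> A = A^n,
 where the right action is (e_i \<otimes> b) a = e_i \<otimes> b a and the left action is
 a (e_i \<otimes> b) = e_i \<otimes> a b.\<close>
definition free_std_bimodule :: "(complex \<Rightarrow> 'b::ring_1) \<Rightarrow> 'b set \<Rightarrow> 'b set \<Rightarrow> nat \<Rightarrow> bool" where
  "free_std_bimodule sc A E n \<longleftrightarrow> (\<exists>\<Phi>. bij_betw \<Phi> (tuples A n) E \<and>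
     (\<forall>f\<in>tuples A n. \<forall>g\<in>tuples A n. \<Phi> (\<lambda>i. f i + g i) = \<Phi> f + \<Phi> g) \<and>
     (\<forall>f\<in>tuples A n. \<forall>c. \<Phi> (\<lambda>i. sc c * f i) = sc c * \<Phi> f) \<and>
     (\<forall>f\<in>tuples A n. \<forall>a\<in>A. \<Phi> f * a = \<Phi> (\<lambda>i. f i * a)) \<and>
     (\<forall>f\<in>tuples A n. \<forall>a\<in>A. a * \<Phi> f = \<Phi> (\<lambda>i. a * f i)))"

text \<open>Z(E) = {e in E. ea = ae for all a in A}; with E = A this is the centre Z(A).\<close>
definition centraliser :: "'b::ring_1 set \<Rightarrow> 'b set \<Rightarrow> 'b set" where
  "centraliser E A = {e\<in>E. \<forall>a\<in>A. e * a = a * e}"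

text \<open>M (a right R-module under the ambient multiplication, R commutative) is finitely
 generated projective: a direct summand (retract, via R-linear maps) of a free module R^m.\<close>
definition fg_projective :: "'b::ring_1 set \<Rightarrow> 'b set \<Rightarrow> bool" where
  "fg_projective R M \<longleftrightarrow> (\<exists>(m::nat) \<iota> \<pi>.
     (\<forall>x\<in>M. \<iota> x \<in> tuples R m) \<and> (\<forall>f\<in>tuples R m. \<pi> f \<in> M) \<and>
     (\<forall>x\<in>M. \<forall>y\<in>M. \<iota> (x + y) = (\<lambda>i. \<iota> x i + \<iota> y i)) \<and>
     (\<forall>x\<in>M. \<forall>z\<in>R. \<iota> (x * z) = (\<lambda>i. \<iota> x i * z)) \<and>
     (\<forall>f\<in>tuples R m. \<forall>g\<in>tuples R m. \<pi> (\<lambda>i. f i + g i) = \<pi> f + \<pi> g) \<and>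
     (\<forall>f\<in>tuples R m. \<forall>z\<in>R. \<pi> (\<lambda>i. f i * z) = \<pi> f * z) \<and>
     (\<forall>x\<in>M. \<pi> (\<iota> x) = x))"

text \<open>Tensor product M \<otimes>_R A as the free complex vector space on M \<times> A (finitely supported
 functions) modulo the subspace spanned by the bilinearity and R-balancedness relations.\<close>
definition free_vs :: "'b set \<Rightarrow> 'b set \<Rightarrow> ('b \<times> 'b \<Rightarrow> complex) set" where
  "free_vs M A = {f. finite {p. f p \<noteq> 0} \<and> {p. f p \<noteq> 0} \<subseteq> M \<times> A}"

definition pt :: "'b \<times> 'b \<Rightarrow> ('b \<times> 'b \<Rightarrow> complex)" where
  "pt p = (\<lambda>q. if q = p then 1 else 0)"

definition tensor_rels :: "(complex \<Rightarrow> 'b::ring_1) \<Rightarrow> 'b set \<Rightarrow> 'b set \<Rightarrow> 'b set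
    \<Rightarrow> ('b \<times> 'b \<Rightarrow> complex) set" where
  "tensor_rels sc R M A =
     {(\<lambda>q. pt (e + e', a) q - pt (e, a) q - pt (e', a) q) | e e' a. e \<in> M \<and> e' \<in> M \<and> a \<in> A} \<union>
     {(\<lambda>q. pt (e, a + a') q - pt (e, a) q - pt (e, a') q) | e a a'. e \<in> M \<and> a \<in> A \<and> a' \<in> A} \<union>
     {(\<lambda>q. pt (sc c * e, a) q - c * pt (e, a) q) | c e a. e \<in> M \<and> a \<in> A} \<union>
     {(\<lambda>q. pt (e, sc c * a) q - c * pt (e, a) q) | c e a. e \<in> M \<and> a \<in> A} \<union>
     {(\<lambda>q. pt (e * z, a) q - pt (e, z * a) q) | e z a. e \<in> M \<and> z \<in> R \<and> a \<in> A}"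

definition tensor_rel_span :: "(complex \<Rightarrow> 'b::ring_1) \<Rightarrow> 'b set \<Rightarrow> 'b set \<Rightarrow> 'b set
    \<Rightarrow> ('b \<times> 'b \<Rightarrow> complex) set" where
  "tensor_rel_span sc R M A = {f. \<exists>(m::nat) c g. (\<forall>k<m. g k \<in> tensor_rels sc R M A) \<and>
      f = (\<lambda>q. \<Sum>k<m. c k * g k q)}"

definition mult_map :: "(complex \<Rightarrow> 'b::ring_1) \<Rightarrow> ('b \<times> 'b \<Rightarrow> complex) \<Rightarrow> 'b" where
  "mult_map sc f = (\<Sum>p\<in>{p. f p \<noteq> 0}. sc (f p) * (fst p * snd p))"

text \<open>The map M \<otimes>_R A \<rightarrow> E, e \<otimes> a \<mapsto> e a, is a (linear) bijection: it is onto E, and its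
 kernel on the free space is exactly the relation subspace.\<close>
definition tensor_map_iso :: "(complex \<Rightarrow> 'b::ring_1) \<Rightarrow> 'b set \<Rightarrow> 'b set \<Rightarrow> 'b set \<Rightarrow> 'b set \<Rightarrow> bool" where
  "tensor_map_iso sc R M A E \<longleftrightarrow>
     mult_map sc ` free_vs M A = E \<and>
     (\<forall>f\<in>free_vs M A. mult_map sc f = 0 \<longrightarrow> f \<in> tensor_rel_span sc R M A)"

definition assumption_III :: "(complex \<Rightarrow> 'b::ring_1) \<Rightarrow> 'b set \<Rightarrow> 'b set \<Rightarrow> bool" where
  "assumption_III sc A E \<longleftrightarrow>
     fg_projective (centraliser A A) (centraliser E A) \<and>
     tensor_map_iso sc (centraliser A A) (centraliser E A) A E"

end

theory Submission
  imports Defs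
begin

text \<open>Let \<open>\<Phi> : A\<^sup>n \<cong> E\<close> be the bimodule isomorphism and \<open>u\<^sub>i = \<Phi>(\<epsilon>\<^sub>i)\<close> the images of the
  standard basis tuples. An element of \<open>E\<close> commutes with \<open>A\<close> exactly when all its coordinates
  do, so \<open>Z(E) \<cong> Z(A)\<^sup>n\<close> is free over \<open>Z(A)\<close>, and every \<open>e \<in> E\<close> equals \<open>\<Sum>\<^sub>i u\<^sub>i e\<^sub>i\<close> with
  \<open>e\<^sub>i\<close> its coordinates; in particular \<open>Z(E) \<otimes> A \<rightarrow> E\<close> is onto. For injectivity, the tensor
  relations rewrite any tensor into the normal form \<open>\<Sum>\<^sub>i u\<^sub>i \<otimes> \<beta>\<^sub>i\<close>, and \<open>\<beta>\<close> is forced to be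
  the coordinate tuple of the image of the tensor; so a tensor with image \<open>0\<close> is equivalent to
  \<open>\<Sum>\<^sub>i u\<^sub>i \<otimes> 0\<close>, which lies in the relation span.\<close>

lemma cplx_algebra_zero: "cplx_algebra sc \<Longrightarrow> sc 0 = 0"
  unfolding cplx_algebra_def by (metis add_0 add_cancel_right_right)

lemma cplx_algebra_add: "cplx_algebra sc \<Longrightarrow> sc (c + d) = sc c + sc d"
  and cplx_algebra_one: "cplx_algebra sc \<Longrightarrow> sc 1 = 1"
  and cplx_algebra_central: "cplx_algebra sc \<Longrightarrow> sc c * x = x * sc c"
  unfolding cplx_algebra_def by blast+

lemma cplx_algebra_sum: "cplx_algebra sc \<Longrightarrow> sc (sum c S) = (\<Sum>j\<in>S. sc (c j))"
  by (induct S rule: infinite_finite_induct) (simp_all add: cplx_algebra_zero cplx_algebra_add)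

lemma sum_support_pt_eq:
  assumes "finite {p. f p \<noteq> 0}"
  shows "(\<lambda>q. \<Sum>p\<in>{p. f p \<noteq> 0}. f p * pt p q) = f"
proof
  fix q
  have "(\<Sum>p\<in>{p. f p \<noteq> 0}. f p * pt p q) = (\<Sum>p\<in>{p. f p \<noteq> 0}. if q = p then f p else 0)"
    by (rule sum.cong) (auto simp: pt_def)
  also have "\<dots> = f q" using assms by simp
  finally show "(\<Sum>p\<in>{p. f p \<noteq> 0}. f p * pt p q) = f q" .
qed

lemma pt_combination_support:
  "{q. (\<Sum>j\<in>J. c j * pt (p j) q) \<noteq> 0} \<subseteq> p ` J"
proof
  fix q assume "q \<in> {q. (\<Sum>j\<in>J. c j * pt (p j) q) \<noteq> 0}"
  then obtain j where "j \<in> J" "c j * pt (p j) q \<noteq> 0"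
    by (metis (mono_tags, lifting) mem_Collect_eq sum.neutral)
  thus "q \<in> p ` J" by (auto simp: pt_def split: if_splits)
qed

lemma pt_combination_in_free_vs:
  assumes "finite J" "p ` J \<subseteq> M \<times> A"
  shows "(\<lambda>q. \<Sum>j\<in>J. c j * pt (p j) q) \<in> free_vs M A"
  using pt_combination_support[of c p J] assms
  unfolding free_vs_def by (blast intro: finite_subset)

lemma mult_map_eq_sum_superset:
  "cplx_algebra sc \<Longrightarrow> finite S \<Longrightarrow> {p. f p \<noteq> 0} \<subseteq> S \<Longrightarrow>
   mult_map sc f = (\<Sum>p\<in>S. sc (f p) * (fst p * snd p))"
  unfolding mult_map_def by (rule sum.mono_neutral_left) (auto simp: cplx_algebra_zero)

lemma mult_map_pt_combination:
  assumes alg: "cplx_algebra sc" and J: "finite J"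
  shows "mult_map sc (\<lambda>q. \<Sum>j\<in>J. c j * pt (p j) q) = (\<Sum>j\<in>J. sc (c j) * (fst (p j) * snd (p j)))"
proof -
  let ?G = "\<lambda>q. \<Sum>j\<in>J. c j * pt (p j) q"
  have G: "?G q = sum c {j\<in>J. p j = q}" for q
    unfolding pt_def sum.inter_filter[OF J] by (rule sum.cong) auto
  have "mult_map sc ?G = (\<Sum>q\<in>p ` J. sc (?G q) * (fst q * snd q))"
    using J by (intro mult_map_eq_sum_superset[OF alg] pt_combination_support) simp_all
  also have "\<dots> = (\<Sum>q\<in>p ` J. \<Sum>j\<in>{j\<in>J. p j = q}. sc (c j) * (fst (p j) * snd (p j)))"
    by (rule sum.cong[OF refl])
       (auto simp: G cplx_algebra_sum[OF alg] sum_distrib_right intro!: sum.cong)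
  also have "\<dots> = (\<Sum>j\<in>J. sc (c j) * (fst (p j) * snd (p j)))"
    by (rule sum.image_gen[OF J, symmetric])
  finally show ?thesis .
qed

context
  fixes sc :: "complex \<Rightarrow> 'b::ring_1" and R M A :: "'b set"
begin

definition tensor_equiv :: "('b \<times> 'b \<Rightarrow> complex) \<Rightarrow> ('b \<times> 'b \<Rightarrow> complex) \<Rightarrow> bool" where
  "tensor_equiv x y \<longleftrightarrow> (\<lambda>q. x q - y q) \<in> tensor_rel_span sc R M A"

lemma tensor_rel_span_zero: "(\<lambda>q. 0) \<in> tensor_rel_span sc R M A"
  unfolding tensor_rel_span_def by (rule CollectI, rule exI[of _ 0]) simp

lemma tensor_rel_span_add_rel:
  assumes x: "x \<in> tensor_rel_span sc R M A" and g: "g \<in> tensor_rels sc R M A"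
  shows "(\<lambda>q. x q + d * g q) \<in> tensor_rel_span sc R M A"
proof -
  obtain m :: nat and c G where G: "\<forall>k<m. G k \<in> tensor_rels sc R M A"
    and x_eq: "x = (\<lambda>q. \<Sum>k<m. c k * G k q)"
    using x unfolding tensor_rel_span_def by blast
  have "(\<Sum>k<m. (c(m:=d)) k * (G(m:=g)) k q) = (\<Sum>k<m. c k * G k q)" for q
    by (rule sum.cong) auto
  hence "(\<lambda>q. x q + d * g q) = (\<lambda>q. \<Sum>k<Suc m. (c(m:=d)) k * (G(m:=g)) k q)"
    by (simp add: x_eq)
  moreover have "\<forall>k<Suc m. (G(m:=g)) k \<in> tensor_rels sc R M A" using G g by auto
  ultimately show ?thesis unfolding tensor_rel_span_def
    by (intro CollectI exI[of _ "Suc m"] exI[of _ "c(m:=d)"] exI[of _ "G(m:=g)"] conjI)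
qed

lemma tensor_rel_span_add:
  assumes x: "x \<in> tensor_rel_span sc R M A" and y: "y \<in> tensor_rel_span sc R M A"
  shows "(\<lambda>q. x q + y q) \<in> tensor_rel_span sc R M A"
proof -
  obtain m :: nat and c G where G: "\<forall>k<m. G k \<in> tensor_rels sc R M A"
    and y_eq: "y = (\<lambda>q. \<Sum>k<m. c k * G k q)"
    using y unfolding tensor_rel_span_def by blast
  have "\<forall>k<m. G k \<in> tensor_rels sc R M A \<Longrightarrow>
        (\<lambda>q. x q + (\<Sum>k<m. c k * G k q)) \<in> tensor_rel_span sc R M A" for m
  proof (induct m)
    case 0 thus ?case using x by simp
  next
    case (Suc m)
    thus ?case using tensor_rel_span_add_rel[of "\<lambda>q. x q + (\<Sum>k<m. c k * G k q)" "G m" "c m"]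
      by (simp add: add.assoc)
  qed
  thus ?thesis using G y_eq by simp
qed

lemma tensor_rel_span_scale:
  assumes "x \<in> tensor_rel_span sc R M A"
  shows "(\<lambda>q. d * x q) \<in> tensor_rel_span sc R M A"
proof -
  obtain m :: nat and c G where G: "\<forall>k<m. G k \<in> tensor_rels sc R M A"
    and x_eq: "x = (\<lambda>q. \<Sum>k<m. c k * G k q)"
    using assms unfolding tensor_rel_span_def by blast
  have "(\<lambda>q. d * x q) = (\<lambda>q. \<Sum>k<m. (d * c k) * G k q)"
    by (simp add: x_eq sum_distrib_left mult.assoc)
  thus ?thesis using G unfolding tensor_rel_span_def
    by (intro CollectI exI[of _ m] exI[of _ "\<lambda>k. d * c k"] exI[of _ G] conjI)
qed

lemma tensor_equiv_of_rel:
  "(\<lambda>q. x q - y q) \<in> tensor_rels sc R M A \<Longrightarrow> tensor_equiv x y"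
  unfolding tensor_equiv_def using tensor_rel_span_add_rel[OF tensor_rel_span_zero, of _ 1]
  by simp

lemma tensor_equiv_refl: "tensor_equiv x x"
  unfolding tensor_equiv_def using tensor_rel_span_zero by simp

lemma tensor_equiv_sym: "tensor_equiv x y \<Longrightarrow> tensor_equiv y x"
  unfolding tensor_equiv_def using tensor_rel_span_scale[of _ "-1"] by fastforce

lemma tensor_equiv_trans [trans]: "tensor_equiv x y \<Longrightarrow> tensor_equiv y z \<Longrightarrow> tensor_equiv x z"
  unfolding tensor_equiv_def using tensor_rel_span_add by fastforce

lemma tensor_equiv_add:
  assumes "tensor_equiv x x'" "tensor_equiv y y'"
  shows "tensor_equiv (\<lambda>q. x q + y q) (\<lambda>q. x' q + y' q)"
proof -
  have "(\<lambda>q. (x q - x' q) + (y q - y' q)) \<in> tensor_rel_span sc R M A"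
    using tensor_rel_span_add assms unfolding tensor_equiv_def by blast
  thus ?thesis unfolding tensor_equiv_def by (simp add: algebra_simps)
qed

lemma tensor_equiv_sum:
  "finite F \<Longrightarrow> (\<And>i. i \<in> F \<Longrightarrow> tensor_equiv (x i) (y i)) \<Longrightarrow>
   tensor_equiv (\<lambda>q. \<Sum>i\<in>F. x i q) (\<lambda>q. \<Sum>i\<in>F. y i q)"
proof (induct F rule: finite_induct)
  case empty thus ?case by (simp add: tensor_equiv_refl)
next
  case (insert a F) thus ?case using tensor_equiv_add[of "x a" "y a"] by simp
qed

lemma tensor_rel_span_if_equiv_zero: "tensor_equiv x (\<lambda>q. 0) \<Longrightarrow> x \<in> tensor_rel_span sc R M A"
  unfolding tensor_equiv_def by simp

lemma tensor_equiv_pt_add_left: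
  assumes "e \<in> M" "e' \<in> M" "a \<in> A"
  shows "tensor_equiv (pt (e + e', a)) (\<lambda>q. pt (e, a) q + pt (e', a) q)"
proof -
  have "(\<lambda>q. pt (e + e', a) q - pt (e, a) q - pt (e', a) q) \<in> tensor_rels sc R M A"
    unfolding tensor_rels_def using assms by blast
  thus ?thesis by (simp add: tensor_equiv_of_rel diff_diff_eq)
qed

lemma tensor_equiv_pt_add_right:
  assumes "e \<in> M" "a \<in> A" "a' \<in> A"
  shows "tensor_equiv (\<lambda>q. pt (e, a) q + pt (e, a') q) (pt (e, a + a'))"
proof -
  have "(\<lambda>q. pt (e, a + a') q - pt (e, a) q - pt (e, a') q) \<in> tensor_rels sc R M A"
    unfolding tensor_rels_def using assms by blast
  thus ?thesis by (simp add: tensor_equiv_sym tensor_equiv_of_rel diff_diff_eq)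
qed

lemma tensor_equiv_pt_scale_right:
  assumes "e \<in> M" "a \<in> A"
  shows "tensor_equiv (\<lambda>q. c * pt (e, a) q) (pt (e, sc c * a))"
proof -
  have "(\<lambda>q. pt (e, sc c * a) q - c * pt (e, a) q) \<in> tensor_rels sc R M A"
    unfolding tensor_rels_def using assms by blast
  thus ?thesis by (simp add: tensor_equiv_sym tensor_equiv_of_rel)
qed

lemma tensor_equiv_pt_balanced:
  assumes "e \<in> M" "z \<in> R" "a \<in> A"
  shows "tensor_equiv (pt (e * z, a)) (pt (e, z * a))"
proof -
  have "(\<lambda>q. pt (e * z, a) q - pt (e, z * a) q) \<in> tensor_rels sc R M A"
    unfolding tensor_rels_def using assms by blast
  thus ?thesis by (rule tensor_equiv_of_rel)
qed

lemma tensor_equiv_pt_zero_left: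
  assumes "0 \<in> M" "a \<in> A" shows "tensor_equiv (pt (0, a)) (\<lambda>q. 0)"
proof -
  have "(\<lambda>q. - pt (0, a) q) \<in> tensor_rel_span sc R M A"
    using tensor_equiv_pt_add_left[OF assms(1,1,2)] unfolding tensor_equiv_def by simp
  from tensor_rel_span_scale[OF this, of "-1"] show ?thesis
    unfolding tensor_equiv_def by simp
qed

lemma tensor_equiv_pt_zero_right:
  assumes "e \<in> M" "0 \<in> A" shows "tensor_equiv (pt (e, 0)) (\<lambda>q. 0)"
proof -
  have "(\<lambda>q. pt (e, 0) q) \<in> tensor_rel_span sc R M A"
    using tensor_equiv_pt_add_right[OF assms(1,2,2)] unfolding tensor_equiv_def by simp
  thus ?thesis unfolding tensor_equiv_def by simp
qed

lemma tensor_equiv_pt_sum_left: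
  assumes "0 \<in> M" "\<And>x y. x \<in> M \<Longrightarrow> y \<in> M \<Longrightarrow> x + y \<in> M" "a \<in> A"
  shows "finite F \<Longrightarrow> (\<And>i. i \<in> F \<Longrightarrow> w i \<in> M) \<Longrightarrow>
    tensor_equiv (pt (\<Sum>i\<in>F. w i, a)) (\<lambda>q. \<Sum>i\<in>F. pt (w i, a) q)"
proof (induct F rule: finite_induct)
  case empty thus ?case using tensor_equiv_pt_zero_left assms by simp
next
  case (insert x F)
  have sum_M: "(\<Sum>i\<in>F. w i) \<in> M"
    using insert(4) assms(1,2) by (induct F rule: infinite_finite_induct) auto
  show ?case
    using tensor_equiv_trans[OF tensor_equiv_pt_add_left
        tensor_equiv_add[OF tensor_equiv_refl insert(3)]] insert sum_M assms(3)
    by simp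
qed

lemma tensor_equiv_pt_sum_right:
  assumes "e \<in> M" "0 \<in> A" "\<And>x y. x \<in> A \<Longrightarrow> y \<in> A \<Longrightarrow> x + y \<in> A"
  shows "finite F \<Longrightarrow> (\<And>i. i \<in> F \<Longrightarrow> b i \<in> A) \<Longrightarrow>
    tensor_equiv (\<lambda>q. \<Sum>i\<in>F. pt (e, b i) q) (pt (e, \<Sum>i\<in>F. b i))"
proof (induct F rule: finite_induct)
  case empty thus ?case using tensor_equiv_sym[OF tensor_equiv_pt_zero_right] assms by simp
next
  case (insert x F)
  have sum_A: "(\<Sum>i\<in>F. b i) \<in> A"
    using insert(4) assms(2,3) by (induct F rule: infinite_finite_induct) auto
  show ?case
    using tensor_equiv_trans[OF tensor_equiv_add[OF tensor_equiv_refl insert(3)]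
        tensor_equiv_pt_add_right] insert sum_A assms(1)
    by simp
qed

lemma tensor_equiv_collect_right:
  fixes n :: nat
  assumes S: "finite S" and u: "\<And>i. i < n \<Longrightarrow> u i \<in> M" and "0 \<in> A"
    and add: "\<And>x y. x \<in> A \<Longrightarrow> y \<in> A \<Longrightarrow> x + y \<in> A"
    and b: "\<And>p i. p \<in> S \<Longrightarrow> i < n \<Longrightarrow> b p i \<in> A"
  shows "tensor_equiv (\<lambda>q. \<Sum>p\<in>S. \<Sum>i<n. pt (u i, b p i) q)
           (\<lambda>q. \<Sum>i<n. pt (u i, \<Sum>p\<in>S. b p i) q)"
proof -
  have swap: "(\<lambda>q. \<Sum>p\<in>S. \<Sum>i<n. pt (u i, b p i) q) = (\<lambda>q. \<Sum>i<n. \<Sum>p\<in>S. pt (u i, b p i) q)"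
    by (rule ext, rule sum.swap)
  have "tensor_equiv (\<lambda>q. \<Sum>i<n. \<Sum>p\<in>S. pt (u i, b p i) q) (\<lambda>q. \<Sum>i<n. pt (u i, \<Sum>p\<in>S. b p i) q)"
  proof (rule tensor_equiv_sum[OF finite_lessThan])
    fix i assume "i \<in> {..<n}"
    thus "tensor_equiv (\<lambda>q. \<Sum>p\<in>S. pt (u i, b p i) q) (pt (u i, \<Sum>p\<in>S. b p i))"
      using tensor_equiv_pt_sum_right[OF u \<open>0 \<in> A\<close> add S] b by simp
  qed
  thus ?thesis by (simp only: swap)
qed

end

locale free_bimodule_iso =
  fixes sc :: "complex \<Rightarrow> 'b::ring_1" and A E :: "'b set" and n :: nat
    and \<Phi> :: "(nat \<Rightarrow> 'b) \<Rightarrow> 'b"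
  assumes alg: "cplx_algebra sc" and subalg: "cplx_subalgebra sc A"
    and bij: "bij_betw \<Phi> (tuples A n) E"
    and \<Phi>_add: "\<And>f g. f \<in> tuples A n \<Longrightarrow> g \<in> tuples A n \<Longrightarrow> \<Phi> (\<lambda>i. f i + g i) = \<Phi> f + \<Phi> g"
    and \<Phi>_mult_right: "\<And>f a. f \<in> tuples A n \<Longrightarrow> a \<in> A \<Longrightarrow> \<Phi> f * a = \<Phi> (\<lambda>i. f i * a)"
    and \<Phi>_mult_left: "\<And>f a. f \<in> tuples A n \<Longrightarrow> a \<in> A \<Longrightarrow> a * \<Phi> f = \<Phi> (\<lambda>i. a * f i)"
begin

abbreviation T where "T \<equiv> tuples A n"
abbreviation Z where "Z \<equiv> centraliser A A"
abbreviation ZE where "ZE \<equiv> centraliser E A"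

lemma one_in_A: "1 \<in> A" and add_in_A: "a \<in> A \<Longrightarrow> b \<in> A \<Longrightarrow> a + b \<in> A"
  and mult_in_A: "a \<in> A \<Longrightarrow> b \<in> A \<Longrightarrow> a * b \<in> A" and sc_mult_in_A: "a \<in> A \<Longrightarrow> sc c * a \<in> A"
  using subalg unfolding cplx_subalgebra_def by blast+

lemma sc_in_A: "sc c \<in> A"
  using sc_mult_in_A[OF one_in_A] by simp

lemma zero_in_A: "0 \<in> A"
  using sc_in_A[of 0] cplx_algebra_zero[OF alg] by simp

lemma sc_central: "sc c * x = x * sc c"
  by (rule cplx_algebra_central[OF alg])

lemma centre_in_A: "z \<in> Z \<Longrightarrow> z \<in> A"
  by (simp add: centraliser_def)

lemma tuples_add: "f \<in> T \<Longrightarrow> g \<in> T \<Longrightarrow> (\<lambda>i. f i + g i) \<in> T"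
  and tuples_mult_right: "f \<in> T \<Longrightarrow> a \<in> A \<Longrightarrow> (\<lambda>i. f i * a) \<in> T"
  and tuples_mult_left: "f \<in> T \<Longrightarrow> a \<in> A \<Longrightarrow> (\<lambda>i. a * f i) \<in> T"
  and tuples_zero: "(\<lambda>i. 0) \<in> T"
  by (auto simp: tuples_def add_in_A mult_in_A zero_in_A)

lemma \<Phi>_zero: "\<Phi> (\<lambda>i. 0) = 0"
  using \<Phi>_add[OF tuples_zero tuples_zero] by simp

definition coords :: "'b \<Rightarrow> nat \<Rightarrow> 'b" where "coords = inv_into T \<Phi>"

lemma coords_in_tuples: "e \<in> E \<Longrightarrow> coords e \<in> T"
  and \<Phi>_coords: "e \<in> E \<Longrightarrow> \<Phi> (coords e) = e"
  and coords_\<Phi>: "f \<in> T \<Longrightarrow> coords (\<Phi> f) = f"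
  using bij unfolding coords_def bij_betw_def by (auto intro: inv_into_into f_inv_into_f)

lemma \<Phi>_in_E: "f \<in> T \<Longrightarrow> \<Phi> f \<in> E"
  using bij bij_betwE by blast

lemma coords_add:
  assumes "e \<in> E" "e' \<in> E" shows "coords (e + e') = (\<lambda>i. coords e i + coords e' i)"
  using \<Phi>_add[OF coords_in_tuples coords_in_tuples, OF assms] \<Phi>_coords[OF assms(1)]
    \<Phi>_coords[OF assms(2)] coords_\<Phi>[OF tuples_add[OF coords_in_tuples coords_in_tuples, OF assms]]
  by simp

lemma coords_mult_right:
  assumes "e \<in> E" "a \<in> A" shows "coords (e * a) = (\<lambda>i. coords e i * a)"
  using \<Phi>_mult_right[OF coords_in_tuples, OF assms] \<Phi>_coords[OF assms(1)]
    coords_\<Phi>[OF tuples_mult_right[OF coords_in_tuples, OF assms]]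
  by simp

lemma E_zero: "0 \<in> E"
  using \<Phi>_in_E[OF tuples_zero] \<Phi>_zero by simp

lemma E_add: assumes "e \<in> E" "e' \<in> E" shows "e + e' \<in> E"
  using \<Phi>_add[OF coords_in_tuples coords_in_tuples, OF assms] \<Phi>_coords[OF assms(1)]
    \<Phi>_coords[OF assms(2)] \<Phi>_in_E[OF tuples_add[OF coords_in_tuples coords_in_tuples, OF assms]]
  by simp

lemma E_mult_right: assumes "e \<in> E" "a \<in> A" shows "e * a \<in> E"
  using \<Phi>_mult_right[OF coords_in_tuples, OF assms] \<Phi>_coords[OF assms(1)]
    \<Phi>_in_E[OF tuples_mult_right[OF coords_in_tuples, OF assms]]
  by simp

lemma E_scale: "e \<in> E \<Longrightarrow> sc c * e \<in> E"
  using E_mult_right[OF _ sc_in_A] sc_central[of c e] by simp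

lemma sc_left_commute: "sc c * (e * b) = e * (sc c * b)"
proof -
  have "sc c * (e * b) = e * b * sc c" by (rule sc_central)
  also have "\<dots> = e * (b * sc c)" by (rule mult.assoc)
  finally show ?thesis by (simp only: sc_central[of c b])
qed

lemma E_sum: "finite F \<Longrightarrow> (\<And>i. i \<in> F \<Longrightarrow> g i \<in> E) \<Longrightarrow> sum g F \<in> E"
  by (induct F rule: finite_induct) (auto intro: E_add E_zero)

lemma coords_sum:
  "finite F \<Longrightarrow> (\<And>k. k \<in> F \<Longrightarrow> g k \<in> E) \<Longrightarrow> coords (sum g F) = (\<lambda>i. \<Sum>k\<in>F. coords (g k) i)"
proof (induct F rule: finite_induct)
  case empty thus ?case using coords_\<Phi>[OF tuples_zero] \<Phi>_zero by simp
next
  case (insert x F) thus ?case by (simp add: coords_add E_sum)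
qed

definition std_tuple :: "nat \<Rightarrow> nat \<Rightarrow> 'b" where
  "std_tuple k = (\<lambda>j. if j = k then 1 else 0)"

definition basis :: "nat \<Rightarrow> 'b" where "basis k = \<Phi> (std_tuple k)"

lemma std_tuple_in_centre_tuples: "k < n \<Longrightarrow> std_tuple k \<in> tuples Z n"
  by (auto simp: tuples_def std_tuple_def centraliser_def one_in_A zero_in_A)

lemma centre_tuples_subset: "tuples Z n \<subseteq> T"
  by (auto simp: tuples_def centraliser_def)

lemma E_eq_sum_basis:
  assumes e: "e \<in> E" shows "e = (\<Sum>k<n. basis k * coords e k)"
proof -
  have coords_A: "k < n \<Longrightarrow> coords e k \<in> A" for k
    using coords_in_tuples[OF e] by (simp add: tuples_def)
  have std_T: "k < n \<Longrightarrow> std_tuple k \<in> T" for k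
    using std_tuple_in_centre_tuples centre_tuples_subset by blast
  have terms_E: "k < n \<Longrightarrow> basis k * coords e k \<in> E" for k
    unfolding basis_def by (intro E_mult_right \<Phi>_in_E std_T coords_A)
  have "coords (\<Sum>k<n. basis k * coords e k) = (\<lambda>i. \<Sum>k<n. coords (basis k * coords e k) i)"
    using terms_E by (intro coords_sum) auto
  also have "\<dots> = (\<lambda>i. \<Sum>k<n. std_tuple k i * coords e k)"
    using std_T coords_A
    by (intro ext sum.cong) (simp_all add: basis_def coords_mult_right \<Phi>_in_E coords_\<Phi>)
  also have "\<dots> = coords e"
  proof
    fix i
    have "(\<Sum>k<n. std_tuple k i * coords e k) = (\<Sum>k<n. if k = i then coords e k else 0)"
      by (rule sum.cong) (auto simp: std_tuple_def)
    also have "\<dots> = coords e i"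
      using coords_in_tuples[OF e] by (simp add: tuples_def)
    finally show "(\<Sum>k<n. std_tuple k i * coords e k) = coords e i" .
  qed
  finally have "coords (\<Sum>k<n. basis k * coords e k) = coords e" .
  moreover have "(\<Sum>k<n. basis k * coords e k) \<in> E"
    using terms_E by (intro E_sum) auto
  ultimately show ?thesis
    by (metis \<Phi>_coords e)
qed

lemma \<Phi>_in_ZE_iff: assumes f: "f \<in> T" shows "\<Phi> f \<in> ZE \<longleftrightarrow> f \<in> tuples Z n"
proof -
  have "\<Phi> f * a = a * \<Phi> f \<longleftrightarrow> (\<forall>i. f i * a = a * f i)" if a: "a \<in> A" for a
  proof -
    have "\<Phi> f * a = a * \<Phi> f \<longleftrightarrow> \<Phi> (\<lambda>i. f i * a) = \<Phi> (\<lambda>i. a * f i)"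
      by (simp add: \<Phi>_mult_right[OF f a] \<Phi>_mult_left[OF f a])
    also have "\<dots> \<longleftrightarrow> (\<lambda>i. f i * a) = (\<lambda>i. a * f i)"
      using bij_betw_imp_inj_on[OF bij] tuples_mult_right[OF f a] tuples_mult_left[OF f a]
      by (auto dest: inj_onD)
    finally show ?thesis by (simp add: fun_eq_iff)
  qed
  moreover have "(\<forall>a\<in>A. \<forall>i. f i * a = a * f i) \<longleftrightarrow> f \<in> tuples Z n"
  proof
    assume "\<forall>a\<in>A. \<forall>i. f i * a = a * f i"
    thus "f \<in> tuples Z n" using f by (auto simp: tuples_def centraliser_def)
  next
    assume fZ: "f \<in> tuples Z n"
    show "\<forall>a\<in>A. \<forall>i. f i * a = a * f i"
    proof (intro ballI allI)
      fix a i assume "a \<in> A"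
      thus "f i * a = a * f i" using fZ by (cases "i < n") (auto simp: tuples_def centraliser_def)
    qed
  qed
  ultimately show ?thesis
    using \<Phi>_in_E[OF f] by (auto simp: centraliser_def)
qed

lemma ZE_in_E: "e \<in> ZE \<Longrightarrow> e \<in> E"
  by (simp add: centraliser_def)

lemma E_scale_mult: "e \<in> ZE \<Longrightarrow> a \<in> A \<Longrightarrow> sc c * (e * a) \<in> E"
  by (rule E_scale[OF E_mult_right[OF ZE_in_E]])

lemma coords_in_centre_tuples: assumes "e \<in> ZE" shows "coords e \<in> tuples Z n"
  using \<Phi>_in_ZE_iff[OF coords_in_tuples[OF ZE_in_E]] \<Phi>_coords[OF ZE_in_E] assms by simp

lemma basis_in_ZE: "k < n \<Longrightarrow> basis k \<in> ZE"
  unfolding basis_def using \<Phi>_in_ZE_iff std_tuple_in_centre_tuples centre_tuples_subset by blast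

lemma ZE_zero: "0 \<in> ZE"
  using E_zero by (simp add: centraliser_def)

lemma ZE_add: "x \<in> ZE \<Longrightarrow> y \<in> ZE \<Longrightarrow> x + y \<in> ZE"
  by (auto simp: centraliser_def E_add distrib_left distrib_right)

lemma ZE_mult_centre: assumes x: "x \<in> ZE" and z: "z \<in> Z" shows "x * z \<in> ZE"
proof -
  have "x * z * a = a * (x * z)" if a: "a \<in> A" for a
  proof -
    have "x * z * a = x * (a * z)" using z a by (simp add: centraliser_def mult.assoc)
    also have "\<dots> = a * (x * z)" using x a by (simp add: centraliser_def flip: mult.assoc)
    finally show ?thesis .
  qed
  thus ?thesis using E_mult_right[OF ZE_in_E[OF x] centre_in_A[OF z]] by (simp add: centraliser_def)
qed

lemma fg_projective_ZE: "fg_projective Z ZE"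
  unfolding fg_projective_def
proof (intro exI[of _ n] exI[of _ coords] exI[of _ \<Phi>] conjI ballI)
  show "coords x \<in> tuples Z n" if "x \<in> ZE" for x
    using coords_in_centre_tuples that .
  show "coords (x + y) = (\<lambda>i. coords x i + coords y i)" if "x \<in> ZE" "y \<in> ZE" for x y
    using coords_add ZE_in_E that by blast
  show "coords (x * z) = (\<lambda>i. coords x i * z)" if "x \<in> ZE" "z \<in> Z" for x z
    using coords_mult_right ZE_in_E centre_in_A that by blast
  show "\<Phi> (coords x) = x" if "x \<in> ZE" for x
    using \<Phi>_coords ZE_in_E that by blast
  show "\<Phi> f \<in> ZE" if "f \<in> tuples Z n" for f
    using \<Phi>_in_ZE_iff centre_tuples_subset that by blast
  show "\<Phi> (\<lambda>i. f i + g i) = \<Phi> f + \<Phi> g" if "f \<in> tuples Z n" "g \<in> tuples Z n" for f g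
    using \<Phi>_add that centre_tuples_subset by blast
  show "\<Phi> (\<lambda>i. f i * z) = \<Phi> f * z" if "f \<in> tuples Z n" "z \<in> Z" for f z
    using \<Phi>_mult_right that centre_tuples_subset centre_in_A by auto
qed

lemma mult_map_image: "mult_map sc ` free_vs ZE A = E"
proof (intro equalityI subsetI)
  fix x assume "x \<in> mult_map sc ` free_vs ZE A"
  then obtain f where "f \<in> free_vs ZE A" and x: "x = mult_map sc f" by blast
  hence S: "finite {p. f p \<noteq> 0}" "{p. f p \<noteq> 0} \<subseteq> ZE \<times> A" by (auto simp: free_vs_def)
  show "x \<in> E" unfolding x mult_map_def
  proof (rule E_sum[OF S(1)])
    fix p assume "p \<in> {p. f p \<noteq> 0}"
    hence "fst p \<in> ZE" "snd p \<in> A" using S(2) by auto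
    thus "sc (f p) * (fst p * snd p) \<in> E" by (rule E_scale_mult)
  qed
next
  fix x assume x: "x \<in> E"
  let ?g = "\<lambda>q. \<Sum>i<n. 1 * pt (basis i, coords x i) q"
  have "?g \<in> free_vs ZE A"
    using coords_in_tuples[OF x] basis_in_ZE
    by (intro pt_combination_in_free_vs) (auto simp: tuples_def)
  moreover have "x = mult_map sc ?g"
    using mult_map_pt_combination[OF alg finite_lessThan, of "\<lambda>_. 1" "\<lambda>i. (basis i, coords x i)"]
      E_eq_sum_basis[OF x] cplx_algebra_one[OF alg] by simp
  ultimately show "x \<in> mult_map sc ` free_vs ZE A" by blast
qed

abbreviation tensor_equiv_ZE where "tensor_equiv_ZE \<equiv> tensor_equiv sc Z ZE A"

lemma tensor_equiv_pt_normal_form: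
  assumes e: "e \<in> ZE" and b: "b \<in> A"
  shows "tensor_equiv_ZE (\<lambda>q. c * pt (e, b) q)
           (\<lambda>q. \<Sum>i<n. pt (basis i, coords (sc c * (e * b)) i) q)"
proof -
  let ?b = "sc c * b"
  have b': "?b \<in> A" using sc_mult_in_A b .
  have coords_Z: "i < n \<Longrightarrow> coords e i \<in> Z" for i
    using coords_in_centre_tuples[OF e] by (simp add: tuples_def)
  have e_eq: "(\<Sum>i<n. basis i * coords e i) = e"
    by (rule E_eq_sum_basis[OF ZE_in_E[OF e], symmetric])
  have coords_eq: "coords (sc c * (e * b)) = (\<lambda>i. coords e i * ?b)"
    unfolding sc_left_commute by (rule coords_mult_right[OF ZE_in_E[OF e] b'])
  have "tensor_equiv_ZE (\<lambda>q. c * pt (e, b) q) (pt (e, ?b))"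
    by (rule tensor_equiv_pt_scale_right[OF e b])
  also have "tensor_equiv_ZE (pt (e, ?b)) (\<lambda>q. \<Sum>i<n. pt (basis i * coords e i, ?b) q)"
  proof -
    have "tensor_equiv_ZE (pt (\<Sum>i<n. basis i * coords e i, ?b))
            (\<lambda>q. \<Sum>i<n. pt (basis i * coords e i, ?b) q)"
    proof (rule tensor_equiv_pt_sum_left[OF ZE_zero _ b' finite_lessThan])
      show "x + y \<in> ZE" if "x \<in> ZE" "y \<in> ZE" for x y using ZE_add that .
      show "basis i * coords e i \<in> ZE" if "i \<in> {..<n}" for i
        using that by (intro ZE_mult_centre basis_in_ZE coords_Z) simp_all
    qed
    thus ?thesis by (simp only: e_eq)
  qed
  also have "tensor_equiv_ZE \<dots> (\<lambda>q. \<Sum>i<n. pt (basis i, coords (sc c * (e * b)) i) q)"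
  proof (rule tensor_equiv_sum[OF finite_lessThan])
    fix i assume "i \<in> {..<n}"
    thus "tensor_equiv_ZE (pt (basis i * coords e i, ?b)) (pt (basis i, coords (sc c * (e * b)) i))"
      unfolding coords_eq by (intro tensor_equiv_pt_balanced basis_in_ZE coords_Z b') simp_all
  qed
  finally show ?thesis .
qed

lemma tensor_equiv_normal_form:
  assumes f: "f \<in> free_vs ZE A"
  shows "tensor_equiv_ZE f (\<lambda>q. \<Sum>i<n. pt (basis i, coords (mult_map sc f) i) q)"
proof -
  define S where "S = {p. f p \<noteq> 0}"
  define x where "x p = sc (f p) * (fst p * snd p)" for p
  have S: "finite S" "S \<subseteq> ZE \<times> A" using f by (auto simp: free_vs_def S_def)
  have x_E: "p \<in> S \<Longrightarrow> x p \<in> E" for p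
    using S(2) unfolding x_def by (intro E_scale_mult) auto
  have x_coords_A: "p \<in> S \<Longrightarrow> coords (x p) i \<in> A" for p i
    using coords_in_tuples[OF x_E] zero_in_A by (cases "i < n") (auto simp: tuples_def)
  have f_eq: "(\<lambda>q. \<Sum>p\<in>S. f p * pt p q) = f"
    unfolding S_def by (rule sum_support_pt_eq) (use f in \<open>simp add: free_vs_def\<close>)
  have "mult_map sc f = (\<Sum>p\<in>S. x p)"
    by (simp add: mult_map_def x_def S_def)
  hence coords_mult_map: "coords (mult_map sc f) = (\<lambda>i. \<Sum>p\<in>S. coords (x p) i)"
    using coords_sum[OF S(1) x_E] by simp
  have "tensor_equiv_ZE (\<lambda>q. \<Sum>p\<in>S. f p * pt p q)
          (\<lambda>q. \<Sum>p\<in>S. \<Sum>i<n. pt (basis i, coords (x p) i) q)"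
  proof (rule tensor_equiv_sum[OF S(1)])
    fix p assume "p \<in> S"
    then obtain e b where "p = (e, b)" "e \<in> ZE" "b \<in> A" using S(2) by auto
    thus "tensor_equiv_ZE (\<lambda>q. f p * pt p q) (\<lambda>q. \<Sum>i<n. pt (basis i, coords (x p) i) q)"
      unfolding x_def using tensor_equiv_pt_normal_form[of e b "f p"] by (simp only: fst_conv snd_conv)
  qed
  also have "tensor_equiv_ZE \<dots> (\<lambda>q. \<Sum>i<n. pt (basis i, \<Sum>p\<in>S. coords (x p) i) q)"
    using x_coords_A by (intro tensor_equiv_collect_right[OF S(1) basis_in_ZE zero_in_A add_in_A])
  finally show ?thesis by (simp only: f_eq coords_mult_map)
qed

lemma mult_map_kernel:
  assumes f: "f \<in> free_vs ZE A" and "mult_map sc f = 0"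
  shows "f \<in> tensor_rel_span sc Z ZE A"
proof (rule tensor_rel_span_if_equiv_zero)
  have "coords (mult_map sc f) = (\<lambda>i. 0)"
    using assms(2) coords_\<Phi>[OF tuples_zero] \<Phi>_zero by simp
  hence "tensor_equiv_ZE f (\<lambda>q. \<Sum>i<n. pt (basis i, 0) q)"
    using tensor_equiv_normal_form[OF f] by simp
  also have "tensor_equiv_ZE \<dots> (\<lambda>q. \<Sum>i<n. 0)"
    using basis_in_ZE zero_in_A by (intro tensor_equiv_sum tensor_equiv_pt_zero_right) auto
  finally show "tensor_equiv_ZE f (\<lambda>q. 0)" by simp
qed

lemma assumption_III_holds: "assumption_III sc A E"
  unfolding assumption_III_def tensor_map_iso_def
  using fg_projective_ZE mult_map_image mult_map_kernel by blast

end

lemma assumption_III_if_free_std_bimodule: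
  assumes "cplx_algebra sc" "cplx_subalgebra sc A" "free_std_bimodule sc A E n"
  shows "assumption_III sc A E"
proof -
  obtain \<Phi> where "free_bimodule_iso sc A E n \<Phi>"
    using assms unfolding free_std_bimodule_def free_bimodule_iso_def by blast
  thus ?thesis by (rule free_bimodule_iso.assumption_III_holds)
qed

theorem corollary4p18:
  fixes sc :: "complex \<Rightarrow> 'b::ring_1" and A :: "'b set" and \<delta> :: "'b \<Rightarrow> 'b" and n :: nat
  assumes "cplx_algebra sc"
    and "cplx_subalgebra sc A"
    and "cderivation sc A \<delta>"
    and "free_std_bimodule sc A (one_forms sc A \<delta>) n"
  shows "assumption_III sc A (one_forms sc A \<delta>)"
  using assms(1,2,4) by (rule assumption_III_if_free_std_bimodule)

end
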